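(* Suppose there are at least three states ($n\ge3$). If an updating rule respects the Blackwell order for a prior $\mu$ in the relative interior of $\Delta$, then either $\varphi^{\mu}(x)=x$ for all $x\in\Delta$ (Bayes' law), or $\varphi^{\mu}$ is constant on the relative interior of $\Delta$.
   Context: Let $\Theta$ be a finite set of states, $|\Theta|=n$, and $\Delta=\Delta(\Theta)$ the simplex of beliefs on $\Theta$. An experiment is a map $\pi:\Theta\to\Delta(S)$ with $S$ finite; with prior $\mu$ it induces the Bayesian distribution over posteriors $\rho_B$, a finitely supported distribution on $\Delta$ with mean $\mu$ (every such distribution arises from some experiment). Blackwell order: $\pi\succeq\pi'$ iff $\rho_B'$ is a mean-preserving contraction of $\rho_B$. An updating rule is given, for each prior $\mu$, by a distortion function $\varphi^{\mu}:\Delta\to\Delta$: when the Bayesian posterior is $x$, the decision maker holds belief $\varphi^{\mu}(x)$. For a compact action set $A$, continuous $u:A\times\Theta\to\mathbb{R}$, and consistent choice $a^*:\Delta\to A$ (i.e. $a^*(y)\in\arg\max_{a}\mathbb{E}_y u(a,\theta)$ for all $y$), let $W(x)=\mathbb{E}_x u(a^*(\varphi^{\mu}(x)),\theta)$. The rule respects the Blackwell order for $\mu$ if for all such $A,u,a^*$ and all experiments $\pi\succeq\pi'$ with Bayesian distributions $\rho_B,\rho_B'$, $\mathbb{E}_{\rho_B}W\ge\mathbb{E}_{\rho_B'}W$. *)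

theory Defs
  imports "HOL-Analysis.Analysis"
begin

definition belief_simplex :: "('a::finite \<Rightarrow> real) set" where
  "belief_simplex = {x. (\<forall>t. 0 \<le> x t) \<and> sum x UNIV = 1}"

definition rel_int_simplex :: "('a::finite \<Rightarrow> real) set" where
  "rel_int_simplex = {x. (\<forall>t. 0 < x t) \<and> sum x UNIV = 1}"

text \<open>Experiments with a finite set of signals (signals encoded as naturals):
  pi t s is the probability of signal s in state t.\<close>
definition sig_support :: "('a \<Rightarrow> nat \<Rightarrow> real) \<Rightarrow> nat set" where
  "sig_support \<pi> = {s. \<exists>t. \<pi> t s \<noteq> 0}"

definition is_experiment :: "('a::finite \<Rightarrow> nat \<Rightarrow> real) \<Rightarrow> bool" where
  "is_experiment \<pi> \<longleftrightarrow> (\<forall>t s. 0 \<le> \<pi> t s) \<and> finite (sig_support \<pi>)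
      \<and> (\<forall>t. sum (\<pi> t) (sig_support \<pi>) = 1)"

definition sprob :: "('a::finite \<Rightarrow> real) \<Rightarrow> ('a \<Rightarrow> nat \<Rightarrow> real) \<Rightarrow> nat \<Rightarrow> real" where
  "sprob \<mu> \<pi> s = (\<Sum>t\<in>UNIV. \<mu> t * \<pi> t s)"

definition posterior :: "('a::finite \<Rightarrow> real) \<Rightarrow> ('a \<Rightarrow> nat \<Rightarrow> real) \<Rightarrow> nat \<Rightarrow> ('a \<Rightarrow> real)" where
  "posterior \<mu> \<pi> s = (\<lambda>t. \<mu> t * \<pi> t s / sprob \<mu> \<pi> s)"

text \<open>Bayesian distribution over posteriors, as a finitely supported weight
  function on beliefs.\<close>
definition bayes_dist :: "('a::finite \<Rightarrow> real) \<Rightarrow> ('a \<Rightarrow> nat \<Rightarrow> real) \<Rightarrow> ('a \<Rightarrow> real) \<Rightarrow> real" where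
  "bayes_dist \<mu> \<pi> x =
     sum (sprob \<mu> \<pi>) {s \<in> sig_support \<pi>. sprob \<mu> \<pi> s \<noteq> 0 \<and> posterior \<mu> \<pi> s = x}"

definition fsupp :: "('b \<Rightarrow> real) \<Rightarrow> 'b set" where
  "fsupp \<rho> = {x. \<rho> x \<noteq> 0}"

definition fexp :: "('b \<Rightarrow> real) \<Rightarrow> ('b \<Rightarrow> real) \<Rightarrow> real" where
  "fexp \<rho> f = (\<Sum>x\<in>fsupp \<rho>. \<rho> x * f x)"

text \<open>rho' is a mean-preserving contraction of rho: there is a joint distribution K
  (K y x = mass on (y,x)) with marginals rho' and rho such that, conditional on y,
  the mean of x equals y.\<close>
definition mpc :: "(('a::finite \<Rightarrow> real) \<Rightarrow> real) \<Rightarrow> (('a \<Rightarrow> real) \<Rightarrow> real) \<Rightarrow> bool" where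
  "mpc \<rho>' \<rho> \<longleftrightarrow> (\<exists>K :: ('a \<Rightarrow> real) \<Rightarrow> ('a \<Rightarrow> real) \<Rightarrow> real.
      (\<forall>y x. 0 \<le> K y x)
    \<and> (\<forall>x. (\<Sum>y\<in>fsupp \<rho>'. K y x) = \<rho> x)
    \<and> (\<forall>y\<in>fsupp \<rho>'. (\<Sum>x\<in>fsupp \<rho>. K y x) = \<rho>' y)
    \<and> (\<forall>y\<in>fsupp \<rho>'. \<forall>t. (\<Sum>x\<in>fsupp \<rho>. K y x * x t) = \<rho>' y * y t))"

definition blackwell_geq :: "('a::finite \<Rightarrow> real) \<Rightarrow> ('a \<Rightarrow> nat \<Rightarrow> real) \<Rightarrow> ('a \<Rightarrow> nat \<Rightarrow> real) \<Rightarrow> bool" where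
  "blackwell_geq \<mu> \<pi> \<pi>' \<longleftrightarrow> mpc (bayes_dist \<mu> \<pi>') (bayes_dist \<mu> \<pi>)"

definition consistent_choice ::
  "'b set \<Rightarrow> ('b \<Rightarrow> 'a::finite \<Rightarrow> real) \<Rightarrow> (('a \<Rightarrow> real) \<Rightarrow> 'b) \<Rightarrow> bool" where
  "consistent_choice A u a \<longleftrightarrow> (\<forall>y\<in>belief_simplex. a y \<in> A \<and>
      (\<forall>b\<in>A. (\<Sum>t\<in>UNIV. y t * u b t) \<le> (\<Sum>t\<in>UNIV. y t * u (a y) t)))"

text \<open>The rule phi (phi mu is the distortion function for prior mu) respects the
  Blackwell order for mu.  Actions range over compact subsets of the space
  'a => real (product topology).\<close>
definition respects_blackwell ::
  "(('a::finite \<Rightarrow> real) \<Rightarrow> ('a \<Rightarrow> real) \<Rightarrow> ('a \<Rightarrow> real)) \<Rightarrow> ('a \<Rightarrow> real) \<Rightarrow> bool" where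
  "respects_blackwell \<phi> \<mu> \<longleftrightarrow>
    (\<forall>(A :: ('a \<Rightarrow> real) set) (u :: ('a \<Rightarrow> real) \<Rightarrow> 'a \<Rightarrow> real) a.
       compact A \<and> (\<forall>t. continuous_on A (\<lambda>b. u b t)) \<and> consistent_choice A u a \<longrightarrow>
       (\<forall>\<pi> \<pi>'. is_experiment \<pi> \<and> is_experiment \<pi>' \<and> blackwell_geq \<mu> \<pi> \<pi>' \<longrightarrow>
          fexp (bayes_dist \<mu> \<pi>) (\<lambda>x. \<Sum>t\<in>UNIV. x t * u (a (\<phi> \<mu> x)) t)
          \<ge> fexp (bayes_dist \<mu> \<pi>') (\<lambda>x. \<Sum>t\<in>UNIV. x t * u (a (\<phi> \<mu> x)) t)))"

end

theory Submission
  imports Defs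
begin

text \<open>Respecting the Blackwell order makes the realized value of every decision problem
  convex on the simplex: splitting one posterior of an experiment into two is a Blackwell
  improvement.  For the problem of accepting or declining a single bet d, convexity
  shows that a bet which is favourable at some belief but rejected there is rejected at every
  full-support belief.  Choosing the bet by Cramer's rule, it follows that whenever
  x is not a fixed point, all distorted interior beliefs lie on the line through
  \<phi>(x) and x.  With at least three states some interior z lies off that line; it is not
  a fixed point either, its own line is different, and so all distorted interior beliefs
  lie in the intersection of two distinct lines, a single point.\<close>

lemma belief_simplex_le_1:
  assumes "x \<in> belief_simplex"
  shows "x t \<le> 1"
proof -
  have "\<forall>t. 0 \<le> x t" "sum x UNIV = 1" using assms by (auto simp: belief_simplex_def)
  then show ?thesis by (metis UNIV_I finite member_le_sum)
qed

lemma belief_simplex_nonzero: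
  assumes "x \<in> belief_simplex"
  obtains t where "x t \<noteq> 0"
  using assms by (force simp: belief_simplex_def)

lemma rel_int_simplex_subset: "rel_int_simplex \<subseteq> belief_simplex"
  by (auto simp: rel_int_simplex_def belief_simplex_def less_imp_le)

lemma belief_simplex_convex_comb:
  assumes "xa \<in> belief_simplex" "xb \<in> belief_simplex" "0 \<le> l" "l \<le> 1"
  shows "(\<lambda>t. l * xa t + (1 - l) * xb t) \<in> belief_simplex"
proof -
  have "0 \<le> l * xa t + (1 - l) * xb t" for t using assms by (auto simp: belief_simplex_def)
  moreover have "(\<Sum>t\<in>UNIV. l * xa t + (1 - l) * xb t) = l * sum xa UNIV + (1 - l) * sum xb UNIV"
    by (simp add: sum.distrib sum_distrib_left)
  ultimately show ?thesis using assms by (simp add: belief_simplex_def)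
qed

lemma rel_int_simplex_split:
  assumes y: "y \<in> rel_int_simplex" and x: "x \<in> belief_simplex"
  obtains l z where "0 < l" "l < 1" "z \<in> belief_simplex" "\<And>t. y t = l * x t + (1 - l) * z t"
proof -
  define m where "m = Min (range y)"
  have m: "0 < m" "\<And>t. m \<le> y t"
    using y by (auto simp: m_def rel_int_simplex_def)
  have "m \<le> 1" using m(2) belief_simplex_le_1 y rel_int_simplex_subset by (meson order.trans subsetD)
  define l where "l = m / 2"
  have l: "0 < l" "l < 1" using m \<open>m \<le> 1\<close> by (auto simp: l_def)
  define z where "z t = (y t - l * x t) / (1 - l)" for t
  have "0 \<le> z t" for t
  proof -
    have "l * x t \<le> l" using belief_simplex_le_1[OF x, of t] l by (simp add: mult_left_le)
    also have "l \<le> y t" using m(1) m(2)[of t] by (simp add: l_def)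
    finally show ?thesis using l by (simp add: z_def)
  qed
  moreover have "sum z UNIV = (sum y UNIV - l * sum x UNIV) / (1 - l)"
    by (simp add: z_def sum_divide_distrib[symmetric] sum_subtractf sum_distrib_left)
  ultimately have "z \<in> belief_simplex"
    using x y l by (simp add: belief_simplex_def rel_int_simplex_def)
  moreover have "y t = l * x t + (1 - l) * z t" for t using l by (simp add: z_def)
  ultimately show ?thesis using that l by blast
qed

lemma rel_int_simplex_not_on_line:
  fixes p v :: "'a::finite \<Rightarrow> real"
  assumes "CARD('a) \<ge> 3"
  obtains z where "z \<in> rel_int_simplex" "\<nexists>m. \<forall>t. z t = p t + m * v t"
proof -
  obtain S :: "'a set" where "card S = 3" using assms by (metis obtain_subset_with_card_n)
  then obtain a b c :: 'a where abc: "a \<noteq> b" "a \<noteq> c" "b \<noteq> c"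
    by (auto simp: card_3_iff)
  define \<epsilon> :: real where "\<epsilon> = 1 / (2 * CARD('a))"
  define z where "z q t = 1 / CARD('a) + (if t = a then \<epsilon> else 0) - (if t = q then \<epsilon> else 0)"
    for q t
  have z: "z q \<in> rel_int_simplex" for q
  proof -
    have "0 < z q t" for t by (auto simp: z_def \<epsilon>_def field_simps)
    moreover have "sum (z q) UNIV = 1" by (simp add: z_def sum.distrib sum_subtractf)
    ultimately show ?thesis by (simp add: rel_int_simplex_def)
  qed
  \<comment> \<open>z a is uniform, and z b - z a, z c - z a are not parallel\<close>
  have "\<exists>q. \<nexists>m. \<forall>t. z q t = p t + m * v t"
  proof (rule ccontr)
    assume "\<nexists>q. \<nexists>m. \<forall>t. z q t = p t + m * v t"
    then obtain m :: "'a \<Rightarrow> real" where m: "\<And>q t. z q t = p t + m q * v t" by metis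
    have "- \<epsilon> = (m b - m a) * v b" "0 = (m c - m a) * v b" "- \<epsilon> = (m c - m a) * v c"
      using m[of b b] m[of a b] m[of c b] m[of a c] m[of c c] abc
      by (auto simp: z_def algebra_simps)
    then show False by (auto simp: \<epsilon>_def)
  qed
  then show ?thesis using that z by blast
qed

definition splitting_experiment ::
  "('a::finite \<Rightarrow> real) \<Rightarrow> (nat \<Rightarrow> real) \<Rightarrow> (nat \<Rightarrow> 'a \<Rightarrow> real) \<Rightarrow> nat \<Rightarrow> 'a \<Rightarrow> nat \<Rightarrow> real" where
  "splitting_experiment \<mu> c x k = (\<lambda>t s. if s < k then c s * x s t / \<mu> t else 0)"

locale prior_splitting =
  fixes \<mu> :: "'a::finite \<Rightarrow> real" and c :: "nat \<Rightarrow> real" and x :: "nat \<Rightarrow> 'a \<Rightarrow> real"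
    and k :: nat
  assumes prior: "\<mu> \<in> rel_int_simplex"
    and weight_pos: "\<And>s. s < k \<Longrightarrow> 0 < c s"
    and belief: "\<And>s. s < k \<Longrightarrow> x s \<in> belief_simplex"
    and mean: "\<And>t. (\<Sum>s<k. c s * x s t) = \<mu> t"
begin

abbreviation "\<pi> \<equiv> splitting_experiment \<mu> c x k"

lemma prior_pos: "0 < \<mu> t"
  using prior by (simp add: rel_int_simplex_def)

lemma prior_nonzero: "\<mu> t \<noteq> 0"
  using prior_pos[of t] by simp

lemma sig_support_eq: "sig_support \<pi> = {..<k}"
proof (intro set_eqI iffI)
  fix s assume "s \<in> {..<k}"
  moreover obtain t where "x s t \<noteq> 0" using belief \<open>s \<in> {..<k}\<close> belief_simplex_nonzero by blast
  ultimately show "s \<in> sig_support \<pi>"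
    using weight_pos[of s] prior_pos[of t] by (auto simp: sig_support_def splitting_experiment_def)
qed (auto simp: sig_support_def splitting_experiment_def split: if_splits)

lemma splitting_is_experiment: "is_experiment \<pi>"
proof -
  have "0 \<le> \<pi> t s" for t s
    using weight_pos[of s] belief[of s] prior_pos[of t]
    by (auto simp: splitting_experiment_def belief_simplex_def)
  moreover have "sum (\<pi> t) {..<k} = 1" for t
    using mean[of t] prior_pos[of t] by (simp add: splitting_experiment_def sum_divide_distrib[symmetric])
  ultimately show ?thesis by (simp add: is_experiment_def sig_support_eq)
qed

lemma sprob_eq: "s < k \<Longrightarrow> sprob \<mu> \<pi> s = c s"
  using belief[of s] prior_nonzero
  by (simp add: sprob_def splitting_experiment_def sum_distrib_left[symmetric] belief_simplex_def)

lemma posterior_eq: "s < k \<Longrightarrow> posterior \<mu> \<pi> s = x s"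
  using sprob_eq weight_pos[of s] prior_nonzero
  by (auto simp: posterior_def splitting_experiment_def fun_eq_iff)

lemma bayes_dist_eq: "bayes_dist \<mu> \<pi> y = (\<Sum>s | s < k \<and> x s = y. c s)"
proof -
  have "{s \<in> sig_support \<pi>. sprob \<mu> \<pi> s \<noteq> 0 \<and> posterior \<mu> \<pi> s = y} = {s. s < k \<and> x s = y}"
    using sprob_eq posterior_eq weight_pos by (force simp: sig_support_eq)
  then show ?thesis
    by (simp add: bayes_dist_def sprob_eq)
qed

lemma fsupp_bayes_dist: "fsupp (bayes_dist \<mu> \<pi>) = x ` {..<k}"
proof -
  have "bayes_dist \<mu> \<pi> y \<noteq> 0 \<longleftrightarrow> y \<in> x ` {..<k}" for y
  proof
    assume "bayes_dist \<mu> \<pi> y \<noteq> 0"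
    then have "{s. s < k \<and> x s = y} \<noteq> {}" by (metis bayes_dist_eq sum.empty)
    then show "y \<in> x ` {..<k}" by blast
  next
    assume "y \<in> x ` {..<k}"
    then have "0 < (\<Sum>s | s < k \<and> x s = y. c s)"
      by (intro sum_pos) (auto simp: weight_pos)
    then show "bayes_dist \<mu> \<pi> y \<noteq> 0" by (simp add: bayes_dist_eq)
  qed
  then show ?thesis by (auto simp: fsupp_def)
qed

lemma fexp_bayes_dist: "fexp (bayes_dist \<mu> \<pi>) W = (\<Sum>s<k. c s * W (x s))"
proof -
  have "fexp (bayes_dist \<mu> \<pi>) W = (\<Sum>y\<in>x ` {..<k}. \<Sum>s | s \<in> {..<k} \<and> x s = y. c s * W (x s))"
    by (auto simp: fexp_def fsupp_bayes_dist bayes_dist_eq sum_distrib_right intro!: sum.cong)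
  also have "\<dots> = (\<Sum>s<k. c s * W (x s))"
    by (rule sum.image_gen[symmetric]) simp
  finally show ?thesis .
qed

end

lemma splitting_blackwell_geq:
  assumes fine: "prior_splitting \<mu> c x k" and coarse: "prior_splitting \<mu> c' x' k'"
    and J_nonneg: "\<And>s' s. 0 \<le> J s' s"
    and J_fine: "\<And>s. s < k \<Longrightarrow> (\<Sum>s'<k'. J s' s) = c s"
    and J_coarse: "\<And>s'. s' < k' \<Longrightarrow> (\<Sum>s<k. J s' s) = c' s'"
    and J_mean: "\<And>s' t. s' < k' \<Longrightarrow> (\<Sum>s<k. J s' s * x s t) = c' s' * x' s' t"
  shows "blackwell_geq \<mu> (splitting_experiment \<mu> c x k) (splitting_experiment \<mu> c' x' k')"
proof -
  interpret F: prior_splitting \<mu> c x k by (rule fine)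
  interpret C: prior_splitting \<mu> c' x' k' by (rule coarse)
  define K where "K y z = (\<Sum>s' | s' \<in> {..<k'} \<and> x' s' = y. \<Sum>s | s \<in> {..<k} \<and> x s = z. J s' s)"
    for y z
  have K_fine: "(\<Sum>y\<in>fsupp (bayes_dist \<mu> C.\<pi>). K y z) = bayes_dist \<mu> F.\<pi> z" for z
  proof -
    have "(\<Sum>y\<in>fsupp (bayes_dist \<mu> C.\<pi>). K y z) = (\<Sum>s'<k'. \<Sum>s | s \<in> {..<k} \<and> x s = z. J s' s)"
      unfolding C.fsupp_bayes_dist K_def by (rule sum.image_gen[symmetric]) simp
    also have "\<dots> = (\<Sum>s | s \<in> {..<k} \<and> x s = z. c s)"
      by (subst sum.swap) (auto simp: J_fine intro!: sum.cong)
    finally show ?thesis by (simp add: F.bayes_dist_eq)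
  qed
  have K_weighted: "(\<Sum>z\<in>fsupp (bayes_dist \<mu> F.\<pi>). K y z * g z)
      = (\<Sum>s' | s' \<in> {..<k'} \<and> x' s' = y. \<Sum>s<k. J s' s * g (x s))" for y g
  proof -
    have "(\<Sum>z\<in>fsupp (bayes_dist \<mu> F.\<pi>). K y z * g z)
        = (\<Sum>s' | s' \<in> {..<k'} \<and> x' s' = y. \<Sum>z\<in>x ` {..<k}. \<Sum>s | s \<in> {..<k} \<and> x s = z. J s' s * g (x s))"
      unfolding F.fsupp_bayes_dist K_def sum_distrib_right
      by (subst sum.swap) (auto intro!: sum.cong)
    also have "\<dots> = (\<Sum>s' | s' \<in> {..<k'} \<and> x' s' = y. \<Sum>s<k. J s' s * g (x s))"
      by (intro sum.cong refl sum.image_gen[symmetric]) simp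
    finally show ?thesis .
  qed
  have K_coarse: "(\<Sum>z\<in>fsupp (bayes_dist \<mu> F.\<pi>). K y z) = bayes_dist \<mu> C.\<pi> y" for y
    using K_weighted[of y "\<lambda>_. 1"] by (simp add: C.bayes_dist_eq J_coarse)
  have K_mean: "(\<Sum>z\<in>fsupp (bayes_dist \<mu> F.\<pi>). K y z * z t) = bayes_dist \<mu> C.\<pi> y * y t" for y t
    using K_weighted[of y "\<lambda>z. z t"] by (simp add: C.bayes_dist_eq J_mean sum_distrib_right)
  have "0 \<le> K y z" for y z unfolding K_def by (intro sum_nonneg J_nonneg)
  then show ?thesis
    unfolding blackwell_geq_def mpc_def using K_fine K_coarse K_mean by blast
qed

definition realized_value ::
  "(('a::finite \<Rightarrow> real) \<Rightarrow> ('a \<Rightarrow> real) \<Rightarrow> ('a \<Rightarrow> real)) \<Rightarrow> ('a \<Rightarrow> real)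
    \<Rightarrow> ('b \<Rightarrow> 'a \<Rightarrow> real) \<Rightarrow> (('a \<Rightarrow> real) \<Rightarrow> 'b) \<Rightarrow> ('a \<Rightarrow> real) \<Rightarrow> real" where
  "realized_value \<phi> \<mu> u a z = (\<Sum>t\<in>UNIV. z t * u (a (\<phi> \<mu> z)) t)"

lemma respects_blackwellD:
  fixes \<phi> :: "('a::finite \<Rightarrow> real) \<Rightarrow> ('a \<Rightarrow> real) \<Rightarrow> ('a \<Rightarrow> real)"
    and A :: "('a \<Rightarrow> real) set"
  assumes "respects_blackwell \<phi> \<mu>"
    and "compact A" "\<And>t. continuous_on A (\<lambda>b. u b t)" "consistent_choice A u a"
    and "is_experiment \<pi>" "is_experiment \<pi>'" "blackwell_geq \<mu> \<pi> \<pi>'"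
  shows "fexp (bayes_dist \<mu> \<pi>') (realized_value \<phi> \<mu> u a)
      \<le> fexp (bayes_dist \<mu> \<pi>) (realized_value \<phi> \<mu> u a)"
  unfolding realized_value_def[abs_def]
  by (rule assms(1)[unfolded respects_blackwell_def, rule_format, of A u a \<pi> \<pi>']) (use assms(2-) in auto)

lemma realized_value_convex:
  fixes \<phi> :: "('a::finite \<Rightarrow> real) \<Rightarrow> ('a \<Rightarrow> real) \<Rightarrow> ('a \<Rightarrow> real)"
    and A :: "('a \<Rightarrow> real) set"
  assumes prior: "\<mu> \<in> rel_int_simplex" and respects: "respects_blackwell \<phi> \<mu>"
    and A: "compact A" "\<And>t. continuous_on A (\<lambda>b. u b t)" "consistent_choice A u a"
    and xa: "xa \<in> belief_simplex" and xb: "xb \<in> belief_simplex" and l: "0 < l" "l < 1"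
  defines "w \<equiv> \<lambda>t. l * xa t + (1 - l) * xb t"
  shows "realized_value \<phi> \<mu> u a w
      \<le> l * realized_value \<phi> \<mu> u a xa + (1 - l) * realized_value \<phi> \<mu> u a xb"
proof -
  let ?W = "realized_value \<phi> \<mu> u a"
  have w: "w \<in> belief_simplex" using belief_simplex_convex_comb[OF xa xb] l by (simp add: w_def)
  \<comment> \<open>complete w to an experiment for the prior, then split w into xa and xb\<close>
  obtain \<alpha> z where \<alpha>: "0 < \<alpha>" "\<alpha> < 1" and z: "z \<in> belief_simplex"
    and split: "\<And>t. \<mu> t = \<alpha> * w t + (1 - \<alpha>) * z t"
    using rel_int_simplex_split[OF prior w] by blast
  define c where "c s = (if s = 0 then \<alpha> * l else if s = 1 then 1 - \<alpha> else \<alpha> * (1 - l))"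
    for s :: nat
  define x where "x s = (if s = 0 then xa else if s = 1 then z else xb)" for s :: nat
  define c' where "c' s = (if s = 0 then \<alpha> else 1 - \<alpha>)" for s :: nat
  define x' where "x' s = (if s = 0 then w else z)" for s :: nat
  define J where "J s' s = (if s' = (if s = 1 then 1 else 0) then c s else 0)" for s' s :: nat
  have lt2: "{..<2::nat} = {0, 1}" and lt3: "{..<3::nat} = {0, 1, 2}" by auto
  have fine: "prior_splitting \<mu> c x 3"
    by unfold_locales
      (use prior \<alpha> l z xa xb split in \<open>auto simp: c_def x_def lt3 w_def algebra_simps\<close>)
  have coarse: "prior_splitting \<mu> c' x' 2"
    by unfold_locales (use prior \<alpha> z w split in \<open>auto simp: c'_def x'_def lt2\<close>)
  have "blackwell_geq \<mu> (splitting_experiment \<mu> c x 3) (splitting_experiment \<mu> c' x' 2)"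
    by (rule splitting_blackwell_geq[OF fine coarse, of J])
      (use \<alpha> l in \<open>auto simp: J_def c_def c'_def x_def x'_def w_def lt2 lt3 algebra_simps\<close>)
  then have "\<alpha> * ?W w + (1 - \<alpha>) * ?W z \<le> \<alpha> * l * ?W xa + (1 - \<alpha>) * ?W z + \<alpha> * (1 - l) * ?W xb"
    using respects_blackwellD[OF respects A prior_splitting.splitting_is_experiment[OF fine]
        prior_splitting.splitting_is_experiment[OF coarse]]
    by (simp add: prior_splitting.fexp_bayes_dist[OF fine] prior_splitting.fexp_bayes_dist[OF coarse]
        lt2 lt3 c_def c'_def x_def x'_def)
  then have "\<alpha> * ?W w \<le> \<alpha> * (l * ?W xa + (1 - l) * ?W xb)" by (simp add: algebra_simps)
  then show ?thesis using \<alpha> by simp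
qed

definition expect :: "('a::finite \<Rightarrow> real) \<Rightarrow> ('a \<Rightarrow> real) \<Rightarrow> real" where
  "expect z d = (\<Sum>t\<in>UNIV. z t * d t)"

lemma expect_convex_comb:
  "expect (\<lambda>t. l * xa t + m * xb t) d = l * expect xa d + m * expect xb d"
  by (simp add: expect_def sum.distrib sum_distrib_left algebra_simps)

lemma expect_minus_const:
  assumes "z \<in> belief_simplex"
  shows "expect z (\<lambda>t. d t - k) = expect z d - k"
proof -
  have "expect z (\<lambda>t. d t - k) = expect z d - k * sum z UNIV"
    by (simp add: expect_def algebra_simps sum_subtractf sum_distrib_left)
  then show ?thesis using assms by (simp add: belief_simplex_def)
qed

lemma expect_two_coordinates:
  "expect z (\<lambda>t. (if t = r then \<alpha> else 0) + (if t = s then \<beta> else 0)) = z r * \<alpha> + z s * \<beta>"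
proof -
  have "expect z (\<lambda>t. (if t = r then \<alpha> else 0) + (if t = s then \<beta> else 0))
      = (\<Sum>t\<in>UNIV. (if t = r then z t * \<alpha> else 0) + (if t = s then z t * \<beta> else 0))"
    unfolding expect_def by (intro sum.cong refl) (auto simp: distrib_left)
  also have "\<dots> = z r * \<alpha> + z s * \<beta>" by (simp add: sum.distrib)
  finally show ?thesis .
qed

lemma two_by_two_solvable:
  fixes a b c e :: real
  assumes "a * e - b * c \<noteq> 0"
  obtains \<alpha> \<beta> where "a * \<alpha> + b * \<beta> = 1" "c * \<alpha> + e * \<beta> = 1"
proof
  let ?D = "a * e - b * c"
  have "a * ((e - b) / ?D) + b * ((a - c) / ?D) = (a * (e - b) + b * (a - c)) / ?D"
    by (simp add: add_divide_distrib)
  also have "a * (e - b) + b * (a - c) = ?D" by (simp add: algebra_simps)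
  finally show "a * ((e - b) / ?D) + b * ((a - c) / ?D) = 1" using assms by simp
  have "c * ((e - b) / ?D) + e * ((a - c) / ?D) = (c * (e - b) + e * (a - c)) / ?D"
    by (simp add: add_divide_distrib)
  also have "c * (e - b) + e * (a - c) = ?D" by (simp add: algebra_simps)
  finally show "c * ((e - b) / ?D) + e * ((a - c) / ?D) = 1" using assms by simp
qed

locale blackwell_rule =
  fixes \<phi> :: "('a::finite \<Rightarrow> real) \<Rightarrow> ('a \<Rightarrow> real) \<Rightarrow> ('a \<Rightarrow> real)"
    and \<mu> :: "'a \<Rightarrow> real"
  assumes distortion_simplex: "\<And>x. x \<in> belief_simplex \<Longrightarrow> \<phi> \<mu> x \<in> belief_simplex"
    and prior: "\<mu> \<in> rel_int_simplex"
    and respects: "respects_blackwell \<phi> \<mu>"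
begin

text \<open>Realized value of the decision problem with two actions: accept the bet paying
  d t in state t, or decline it.\<close>
definition bet_value :: "('a \<Rightarrow> real) \<Rightarrow> ('a \<Rightarrow> real) \<Rightarrow> real" where
  "bet_value d z = (if 0 \<le> expect (\<phi> \<mu> z) d then expect z d else 0)"

lemma bet_value_convex:
  assumes "xa \<in> belief_simplex" "xb \<in> belief_simplex" "0 < l" "l < 1"
  shows "bet_value d (\<lambda>t. l * xa t + (1 - l) * xb t) \<le> l * bet_value d xa + (1 - l) * bet_value d xb"
proof -
  define A where "A = {\<lambda>_. 0, d}"
  define a where "a y = (if 0 \<le> expect y d then d else (\<lambda>_. 0))" for y
  have "compact A" "continuous_on A (\<lambda>b. b t)" for t
    by (auto simp: A_def intro: continuous_on_subset[OF continuous_on_product_coordinates])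
  moreover have "consistent_choice A (\<lambda>b. b) a"
    by (auto simp: consistent_choice_def A_def a_def expect_def)
  ultimately have "realized_value \<phi> \<mu> (\<lambda>b. b) a (\<lambda>t. l * xa t + (1 - l) * xb t)
      \<le> l * realized_value \<phi> \<mu> (\<lambda>b. b) a xa + (1 - l) * realized_value \<phi> \<mu> (\<lambda>b. b) a xb"
    by (intro realized_value_convex[OF prior respects] assms)
  moreover have "realized_value \<phi> \<mu> (\<lambda>b. b) a = bet_value d"
    by (auto simp: realized_value_def bet_value_def a_def expect_def)
  ultimately show ?thesis by simp
qed

lemma bet_rejected_where_losing:
  assumes x: "x \<in> belief_simplex" "0 < expect x d" "expect (\<phi> \<mu> x) d < 0"
    and y: "y \<in> belief_simplex" "expect y d < 0"
  shows "expect (\<phi> \<mu> y) d < 0"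
proof (rule ccontr)
  assume "\<not> expect (\<phi> \<mu> y) d < 0"
  then have value_y: "bet_value d y = expect y d" by (simp add: bet_value_def)
  define l where "l = expect x d / (expect x d - expect y d)"
  have l: "0 < l" "l < 1" using x y by (auto simp: l_def field_simps)
  have "expect (\<lambda>t. l * y t + (1 - l) * x t) d = l * expect y d + (1 - l) * expect x d"
    by (rule expect_convex_comb)
  also have "\<dots> = 0" using x y by (simp add: l_def field_simps)
  finally have "bet_value d (\<lambda>t. l * y t + (1 - l) * x t) = 0" by (simp add: bet_value_def)
  moreover have "bet_value d x = 0" using x by (simp add: bet_value_def)
  ultimately have "0 \<le> l * expect y d"
    using bet_value_convex[OF y(1) x(1) l, of d] value_y by simp
  moreover have "l * expect y d < 0" using l y by (simp add: mult_pos_neg)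
  ultimately show False by simp
qed

lemma bet_rejected_where_winning:
  assumes x: "x \<in> belief_simplex" "0 < expect x d" "expect (\<phi> \<mu> x) d < 0"
    and y: "y \<in> rel_int_simplex" "0 < expect y d"
  shows "expect (\<phi> \<mu> y) d < 0"
proof (rule ccontr)
  assume "\<not> expect (\<phi> \<mu> y) d < 0"
  then have value_y: "bet_value d y = expect y d" by (simp add: bet_value_def)
  obtain l z where l: "0 < l" "l < 1" and z: "z \<in> belief_simplex"
    and split: "\<And>t. y t = l * x t + (1 - l) * z t"
    using rel_int_simplex_split[OF y(1) x(1)] by blast
  have y_eq: "y = (\<lambda>t. l * x t + (1 - l) * z t)" using split by auto
  have "bet_value d x = 0" using x by (simp add: bet_value_def)
  then have "expect y d \<le> (1 - l) * bet_value d z"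
    using bet_value_convex[OF x(1) z l, of d] value_y y_eq by simp
  moreover have "expect y d = l * expect x d + (1 - l) * expect z d"
    by (subst y_eq) (rule expect_convex_comb)
  moreover have "0 < l * expect x d" using l x by simp
  ultimately show False
    using y l by (auto simp: bet_value_def split: if_splits)
qed

text \<open>The threshold k reduces to the threshold 0 by shifting the payoff, which is harmless
  on the simplex.\<close>
lemma bet_rejected_everywhere:
  assumes x: "x \<in> belief_simplex" "k < expect x d" "expect (\<phi> \<mu> x) d < k"
    and y: "y \<in> rel_int_simplex"
  shows "expect (\<phi> \<mu> y) d < k"
proof (cases "expect y d < k")
  case True
  have "expect (\<phi> \<mu> y) (\<lambda>t. d t - k) < 0"
    using bet_rejected_where_losing[of x "\<lambda>t. d t - k" y] x True y rel_int_simplex_subset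
      distortion_simplex
    by (auto simp: expect_minus_const)
  then show ?thesis
    using y rel_int_simplex_subset distortion_simplex by (auto simp: expect_minus_const)
next
  case False
  define k' where "k' = (k + expect (\<phi> \<mu> x) d) / 2"
  have "expect (\<phi> \<mu> y) (\<lambda>t. d t - k') < 0"
    using bet_rejected_where_winning[of x "\<lambda>t. d t - k'" y] x False y rel_int_simplex_subset
      distortion_simplex
    by (auto simp: expect_minus_const k'_def)
  then show ?thesis
    using x y rel_int_simplex_subset distortion_simplex by (auto simp: expect_minus_const k'_def)
qed

text \<open>Otherwise a bet d solving a 2x2 linear system gains 1 from \<phi> \<mu> x to x and from
  \<phi> \<mu> x to \<phi> \<mu> y, contradicting bet_rejected_everywhere at the midway threshold.\<close>
lemma distortions_collinear:
  assumes x: "x \<in> belief_simplex" and y: "y \<in> rel_int_simplex"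
  shows "(\<phi> \<mu> y s - \<phi> \<mu> x s) * (x r - \<phi> \<mu> x r) = (\<phi> \<mu> y r - \<phi> \<mu> x r) * (x s - \<phi> \<mu> x s)"
proof (rule ccontr)
  define p q where "p = \<phi> \<mu> x" and "q = \<phi> \<mu> y"
  assume "\<not> ?thesis"
  then have "(x r - p r) * (q s - p s) - (x s - p s) * (q r - p r) \<noteq> 0"
    by (simp add: p_def q_def algebra_simps)
  then obtain \<alpha> \<beta> where
      \<alpha>\<beta>: "(x r - p r) * \<alpha> + (x s - p s) * \<beta> = 1" "(q r - p r) * \<alpha> + (q s - p s) * \<beta> = 1"
    by (rule two_by_two_solvable)
  define d where "d t = (if t = r then \<alpha> else 0) + (if t = s then \<beta> else 0)" for t
  have expect_d: "expect z d = z r * \<alpha> + z s * \<beta>" for z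
    unfolding d_def by (rule expect_two_coordinates)
  have "expect (\<phi> \<mu> y) d < expect p d + 1/2"
    by (rule bet_rejected_everywhere[OF x _ _ y])
      (use \<alpha>\<beta>(1) in \<open>simp_all add: expect_d p_def algebra_simps\<close>)
  then show False using \<alpha>\<beta>(2) by (simp add: expect_d q_def algebra_simps)
qed

lemma distortion_on_line:
  assumes x: "x \<in> belief_simplex" and r: "\<phi> \<mu> x r \<noteq> x r" and y: "y \<in> rel_int_simplex"
  shows "\<exists>c. \<forall>s. \<phi> \<mu> y s = \<phi> \<mu> x s + c * (x s - \<phi> \<mu> x s)"
proof (intro exI allI)
  fix s
  show "\<phi> \<mu> y s = \<phi> \<mu> x s + (\<phi> \<mu> y r - \<phi> \<mu> x r) / (x r - \<phi> \<mu> x r) * (x s - \<phi> \<mu> x s)"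
    using distortions_collinear[OF x y, of s r] r by (simp add: field_simps)
qed

lemma distortion_constant_off_line:
  assumes x: "x \<in> belief_simplex" and r: "\<phi> \<mu> x r \<noteq> x r"
    and z: "z \<in> rel_int_simplex" and off_line: "\<nexists>m. \<forall>t. z t = \<phi> \<mu> x t + m * (x t - \<phi> \<mu> x t)"
    and y: "y \<in> rel_int_simplex"
  shows "\<phi> \<mu> y = \<phi> \<mu> z"
proof -
  obtain cz where cz: "\<And>s. \<phi> \<mu> z s = \<phi> \<mu> x s + cz * (x s - \<phi> \<mu> x s)"
    using distortion_on_line[OF x r z] by blast
  obtain r' where r': "\<phi> \<mu> z r' \<noteq> z r'"
    using off_line cz by (metis ext)
  obtain c where c: "\<And>s. \<phi> \<mu> y s = \<phi> \<mu> x s + c * (x s - \<phi> \<mu> x s)"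
    using distortion_on_line[OF x r y] by blast
  obtain e where e: "\<And>s. \<phi> \<mu> y s = \<phi> \<mu> z s + e * (z s - \<phi> \<mu> z s)"
    using distortion_on_line[OF _ r' y] z rel_int_simplex_subset by blast
  have "e = 0"
  proof (rule ccontr)
    assume "e \<noteq> 0"
    then have "z t = \<phi> \<mu> x t + (cz + (c - cz) / e) * (x t - \<phi> \<mu> x t)" for t
      using c[of t] e[of t] cz[of t] by (simp add: field_simps)
    then show False using off_line by blast
  qed
  then show ?thesis using e by auto
qed

end

theorem corollary1:
  fixes \<phi> :: "('a::finite \<Rightarrow> real) \<Rightarrow> ('a \<Rightarrow> real) \<Rightarrow> ('a \<Rightarrow> real)"
    and \<mu> :: "'a \<Rightarrow> real"
  assumes "CARD('a) \<ge> 3"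
    and "\<And>x. x \<in> belief_simplex \<Longrightarrow> \<phi> \<mu> x \<in> belief_simplex"
    and "\<mu> \<in> rel_int_simplex"
    and "respects_blackwell \<phi> \<mu>"
  shows "(\<forall>x\<in>belief_simplex. \<phi> \<mu> x = x) \<or> (\<exists>c. \<forall>x\<in>rel_int_simplex. \<phi> \<mu> x = c)"
proof -
  interpret blackwell_rule \<phi> \<mu> using assms(2-4) by unfold_locales
  have "\<exists>c. \<forall>y\<in>rel_int_simplex. \<phi> \<mu> y = c" if not_bayes: "\<not> (\<forall>x\<in>belief_simplex. \<phi> \<mu> x = x)"
  proof -
    obtain x r where x: "x \<in> belief_simplex" and r: "\<phi> \<mu> x r \<noteq> x r"
      using not_bayes by (auto simp: fun_eq_iff)
    obtain z where "z \<in> rel_int_simplex" "\<nexists>m. \<forall>t. z t = \<phi> \<mu> x t + m * (x t - \<phi> \<mu> x t)"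
      using rel_int_simplex_not_on_line[OF assms(1), of "\<phi> \<mu> x" "\<lambda>t. x t - \<phi> \<mu> x t"] by blast
    then show ?thesis using distortion_constant_off_line[OF x r] by blast
  qed
  then show ?thesis by blast
qed

end
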